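(* Let $\lambda\neq0$ and $\xi=e_{12}-e_{14}+\lambda e_2$. On $\mathbb R^4$ use the global coordinates $\tilde x^1=2\lambda x^1+(x^2+x^4)^2$, $\tilde x^2=(x^2+x^4)/\lambda$, $\tilde x^3=x^3$, $\tilde x^4=\lambda x^4+x^1(x^2+x^4)+(x^2+x^4)^3/(3\lambda)$. Then a smooth covector field $A$ on $\mathbb R^4$ satisfies $L_\xi A=0$ if and only if there are smooth functions $C_1,C_2,C_3,B$ of $(\tilde x^1,\tilde x^3,\tilde x^4)\in\mathbb R^3$ such that $$A_1=C_2\tilde x^2+C_3,\quad A_2=\tfrac12C_2(\tilde x^2)^2+C_3\tilde x^2+C_1,\quad A_3=B,\quad A_4=A_2+C_2 .$$
   Context: Work in $\mathbb R^4$ with Galilean (Cartesian) coordinates $x^1,x^2,x^3,x^4$ of Minkowski space (metric $\mathrm{diag}(-1,-1,-1,1)$). A potential on an open set $U\subseteq\mathbb R^4$ is a smooth covector field $A=A_i\,dx^i$; its components $A_i$ are always those with respect to the coordinates $x^i$, even when written as functions of other variables. For a vector field $\xi=\xi^k\partial_k$ the Lie derivative is $(L_\xi A)_i=\xi^k\partial_kA_i+A_k\partial_i\xi^k$. The vector fields used are, by components $(\xi^1,\xi^2,\xi^3,\xi^4)$: $e_1=(1,0,0,0)$, $e_2=(0,1,0,0)$, $e_3=(0,0,1,0)$, $e_4=(0,0,0,1)$, $e_{12}=(-x^2,x^1,0,0)$, $e_{13}=(x^3,0,-x^1,0)$, $e_{23}=(0,-x^3,x^2,0)$, $e_{14}=(x^4,0,0,x^1)$,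 $e_{24}=(0,x^4,0,x^2)$, $e_{34}=(0,0,x^4,x^3)$. A potential admits a family of vector fields if $L_\xi A=0$ for each $\xi$ in it (equivalently for every element of their linear span). "Functions" are smooth real functions; $\mathrm{ch}=\cosh$, $\mathrm{sh}=\sinh$. *)

theory Defs
  imports "HOL-Analysis.Analysis"
begin

definition pd :: "'n::finite \<Rightarrow> (real^'n \<Rightarrow> real) \<Rightarrow> real^'n \<Rightarrow> real" where
  "pd i f x = frechet_derivative f (at x) (axis i 1)"

fun Ck :: "nat \<Rightarrow> (real^'n::finite \<Rightarrow> real) \<Rightarrow> bool" where
  "Ck 0 f = continuous_on UNIV f"
| "Ck (Suc k) f = ((\<forall>x. f differentiable (at x)) \<and> (\<forall>i. Ck k (pd i f)))"

definition smooth :: "(real^'n::finite \<Rightarrow> real) \<Rightarrow> bool" where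
  "smooth f \<longleftrightarrow> (\<forall>k. Ck k f)"

text \<open>A covector field on R^4 is given by its components A x $ i (w.r.t. x^i);
  a vector field likewise by xi x $ k.\<close>
definition smooth_field :: "(real^4 \<Rightarrow> real^4) \<Rightarrow> bool" where
  "smooth_field A \<longleftrightarrow> (\<forall>i. smooth (\<lambda>x. A x $ i))"

definition lie :: "(real^4 \<Rightarrow> real^4) \<Rightarrow> (real^4 \<Rightarrow> real^4) \<Rightarrow> real^4 \<Rightarrow> real^4" where
  "lie xi A x = (\<chi> i. (\<Sum>k\<in>UNIV. xi x $ k * pd k (\<lambda>y. A y $ i) x
                                + A x $ k * pd i (\<lambda>y. xi y $ k) x))"

definition e2 :: "real^4 \<Rightarrow> real^4" where
  "e2 x = vector [0, 1, 0, 0]"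
definition e12 :: "real^4 \<Rightarrow> real^4" where
  "e12 x = vector [- (x$2), x$1, 0, 0]"
definition e14 :: "real^4 \<Rightarrow> real^4" where
  "e14 x = vector [x$4, 0, 0, x$1]"

end

theory Submission
  imports Defs
begin

text \<open>In the coordinates \<open>t1, \<dots>, t4\<close> of the statement, \<xi> is \<open>\<partial>/\<partial>t2\<close>: the inverse chart
  \<open>(p, s) \<mapsto> x\<close> with \<open>(t1, t3, t4) = p\<close> and \<open>t2 = s\<close> traces integral curves of \<xi> as s
  varies. Since \<xi> is affine, \<open>L\<^sub>\<xi> A = \<xi>(A) + (D\<xi>)\<^sup>T A\<close> with constant \<open>D\<xi>\<close>, so along each
  curve \<open>L\<^sub>\<xi> A = 0\<close> is the nilpotent linear ODE
  \<open>a1' = a4 - a2, a2' = a1, a3' = 0, a4' = a1\<close>, whose solutions are exactly the stated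
  polynomials in s. Their coefficients are components of A at the point \<open>(p, 0)\<close> of the
  chart, which depends linearly on p, so they are smooth in p.\<close>

lemma vector_4 [simp]:
  "(vector [x, y, z, w] :: 'a::zero^4) $ 1 = x"
  "(vector [x, y, z, w] :: 'a::zero^4) $ 2 = y"
  "(vector [x, y, z, w] :: 'a::zero^4) $ 3 = z"
  "(vector [x, y, z, w] :: 'a::zero^4) $ 4 = w"
  unfolding vector_def by simp_all

lemma pd_eqI:
  assumes "(f has_derivative f') (at x)"
  shows "pd i f x = f' (axis i 1)"
  using assms unfolding pd_def by (simp add: frechet_derivative_at[symmetric])

lemma pd_const: "pd i (\<lambda>y. c) x = 0"
  by (simp add: pd_def)

lemma pd_add:
  assumes "f differentiable at x" and "g differentiable at x"
  shows "pd i (\<lambda>y. f y + g y) x = pd i f x + pd i g x"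
proof -
  obtain f' g' where f: "(f has_derivative f') (at x)" and g: "(g has_derivative g') (at x)"
    using assms unfolding differentiable_def by blast
  show ?thesis
    using pd_eqI[OF has_derivative_add[OF f g]] pd_eqI[OF f] pd_eqI[OF g] by simp
qed

lemma pd_cmult:
  assumes "f differentiable at x"
  shows "pd i (\<lambda>y. c * f y) x = c * pd i f x"
proof -
  obtain f' where f: "(f has_derivative f') (at x)"
    using assms unfolding differentiable_def by blast
  show ?thesis
    using pd_eqI[OF has_derivative_mult_right[OF f]] pd_eqI[OF f] by simp
qed

definition dir_deriv :: "real^'n \<Rightarrow> (real^'n \<Rightarrow> real) \<Rightarrow> real^'n \<Rightarrow> real" where
  "dir_deriv v f x = (\<Sum>k\<in>UNIV. v $ k * pd k f x)"

lemma dir_deriv_eq_frechet_derivative: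
  assumes "f differentiable at x"
  shows "dir_deriv v f x = frechet_derivative f (at x) v"
proof -
  have "linear (frechet_derivative f (at x))"
    using assms frechet_derivative_works has_derivative_linear by blast
  then have "frechet_derivative f (at x) (\<Sum>k\<in>UNIV. v $ k *\<^sub>R axis k 1) = dir_deriv v f x"
    by (simp add: linear_sum linear_scale dir_deriv_def pd_def)
  then show ?thesis
    using basis_expansion[of v] by (simp add: scalar_mult_eq_scaleR)
qed

lemma has_vector_derivative_vecI:
  fixes f :: "real \<Rightarrow> real^'n"
  assumes "\<And>j. ((\<lambda>t. f t $ j) has_real_derivative f' $ j) (at x within S)"
  shows "(f has_vector_derivative f') (at x within S)"
  unfolding has_vector_derivative_def
proof (rule iffD2[OF has_derivative_componentwise_within], intro ballI)
  fix i :: "real^'n" assume "i \<in> Basis"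
  then obtain j where "i = axis j 1" unfolding Basis_vec_def by auto
  then show "((\<lambda>x. f x \<bullet> i) has_derivative (\<lambda>h. (h *\<^sub>R f') \<bullet> i)) (at x within S)"
    using assms[of j]
    by (simp add: inner_axis has_real_derivative_iff_has_vector_derivative has_vector_derivative_def)
qed

lemma vec_nth_has_derivative [derivative_intros]:
  "((\<lambda>y::real^'n. y $ j) has_derivative (\<lambda>h. h $ j)) F"
  by (rule bounded_linear_imp_has_derivative) (rule bounded_linear_vec_nth)

lemma has_real_derivative_along_curve:
  assumes "(\<gamma> has_vector_derivative v) (at t)" and "f differentiable at (\<gamma> t)"
  shows "((\<lambda>s. f (\<gamma> s)) has_real_derivative dir_deriv v f (\<gamma> t)) (at t)"
proof -
  have "(f has_derivative frechet_derivative f (at (\<gamma> t))) (at (\<gamma> t) within range \<gamma>)"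
    using assms(2) frechet_derivative_works has_derivative_at_withinI by blast
  then have "((f \<circ> \<gamma>) has_vector_derivative frechet_derivative f (at (\<gamma> t)) v) (at t)"
    using vector_derivative_diff_chain_within[of \<gamma> v t UNIV] assms(1) by simp
  then show ?thesis
    using assms(2)
    by (simp add: dir_deriv_eq_frechet_derivative has_real_derivative_iff_has_vector_derivative o_def)
qed

lemma Ck_const: "Ck k (\<lambda>x. c)"
  by (induction k arbitrary: c) (auto simp: pd_const[abs_def])

lemma Ck_add: "Ck k f \<Longrightarrow> Ck k g \<Longrightarrow> Ck k (\<lambda>x. f x + g x)"
proof (induction k arbitrary: f g)
  case 0
  then show ?case by (auto intro: continuous_on_add)
next
  case (Suc k)
  then have "pd i (\<lambda>y. f y + g y) = (\<lambda>x. pd i f x + pd i g x)" for i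
    by (auto intro!: pd_add)
  with Suc show ?case by auto
qed

lemma Ck_cmult: "Ck k f \<Longrightarrow> Ck k (\<lambda>x. c * f x)"
proof (induction k arbitrary: f)
  case 0
  then show ?case by (auto intro: continuous_on_mult_left)
next
  case (Suc k)
  then have "pd i (\<lambda>y. c * f y) = (\<lambda>x. c * pd i f x)" for i
    by (auto intro!: pd_cmult)
  with Suc show ?case by auto
qed

lemma Ck_sum: "finite S \<Longrightarrow> (\<And>j. j \<in> S \<Longrightarrow> Ck k (f j)) \<Longrightarrow> Ck k (\<lambda>x. \<Sum>j\<in>S. f j x)"
  by (induction S rule: finite_induct) (auto intro: Ck_add Ck_const)

lemma Ck_comp_linear:
  fixes L :: "real^'m \<Rightarrow> real^'n"
  assumes "linear L"
  shows "Ck k f \<Longrightarrow> Ck k (\<lambda>x. f (L x))"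
proof (induction k arbitrary: f)
  case 0
  have "continuous_on UNIV L"
    using assms by (simp add: linear_continuous_on linear_linear)
  with 0 show ?case by (auto intro: continuous_on_compose2[of UNIV f])
next
  case (Suc k)
  have dL: "(L has_derivative L) (at x)" for x
    using assms by (simp add: linear_linear bounded_linear_imp_has_derivative)
  have df: "(f has_derivative frechet_derivative f (at (L x))) (at (L x))" for x
    using Suc.prems by (simp add: frechet_derivative_works)
  have dfL: "((\<lambda>x. f (L x)) has_derivative (\<lambda>h. frechet_derivative f (at (L x)) (L h))) (at x)" for x
    using diff_chain_at[OF dL df] by (simp add: o_def)
  have "pd i (\<lambda>x. f (L x)) = (\<lambda>x. \<Sum>j\<in>UNIV. L (axis i 1) $ j * pd j f (L x))" for i
    using Suc.prems
    by (auto simp: pd_eqI[OF dfL] dir_deriv_eq_frechet_derivative[symmetric] dir_deriv_def)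
  moreover have "Ck k (\<lambda>x. \<Sum>j\<in>UNIV. L (axis i 1) $ j * pd j f (L x))" for i
    using Suc by (intro Ck_sum Ck_cmult) auto
  ultimately show ?case
    using dfL by (auto simp: differentiable_def)
qed

lemma smooth_diff: "smooth f \<Longrightarrow> smooth g \<Longrightarrow> smooth (\<lambda>x. f x - g x)"
  unfolding smooth_def using Ck_add Ck_cmult[of _ g "-1"] by fastforce

lemma smooth_comp_linear: "linear L \<Longrightarrow> smooth f \<Longrightarrow> smooth (\<lambda>x. f (L x))"
  unfolding smooth_def using Ck_comp_linear by blast

definition xi_field :: "real \<Rightarrow> real^4 \<Rightarrow> real^4" where
  "xi_field lam x = vector [- x$2 - x$4, x$1 + lam, 0, - x$1]"

text \<open>Solves \<open>first_integrals lam x = p\<close>, \<open>flow_time lam x = s\<close> for x, with \<open>u = x$2 + x$4\<close>.\<close>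

definition flow_chart :: "real \<Rightarrow> real^3 \<Rightarrow> real \<Rightarrow> real^4" where
  "flow_chart lam p s =
     (let u = lam * s;
          x1 = (p$1 - u^2) / (2 * lam);
          x4 = (p$3 - x1 * u - u^3 / (3 * lam)) / lam
      in vector [x1, u - x4, p$2, x4])"

lemma flow_chart_integral_curve:
  assumes "lam \<noteq> 0"
  shows "(flow_chart lam p has_vector_derivative xi_field lam (flow_chart lam p s)) (at s)"
proof -
  define x1 where "x1 t = (p$1 - (lam * t)^2) / (2 * lam)" for t
  define x4 where "x4 t = (p$3 - x1 t * (lam * t) - (lam * t)^3 / (3 * lam)) / lam" for t
  have chart: "flow_chart lam p t = vector [x1 t, lam * t - x4 t, p$2, x4 t]" for t
    unfolding flow_chart_def x1_def x4_def Let_def ..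
  have d1: "(x1 has_real_derivative - (lam * s)) (at s)"
    unfolding x1_def using assms
    by (auto intro!: derivative_eq_intros simp: field_simps power2_eq_square)
  have d4: "(x4 has_real_derivative - x1 s) (at s)"
    unfolding x4_def using assms
    by (auto intro!: derivative_eq_intros d1 simp: field_simps power2_eq_square power3_eq_cube)
  have "((\<lambda>t. flow_chart lam p t $ j) has_real_derivative xi_field lam (flow_chart lam p s) $ j) (at s)"
    for j :: 4
    using exhaust_4[of j] unfolding chart xi_field_def
    by (auto intro!: derivative_eq_intros d1 d4)
  then show ?thesis
    by (rule has_vector_derivative_vecI)
qed

definition first_integrals :: "real \<Rightarrow> real^4 \<Rightarrow> real^3" where
  "first_integrals lam x =
     vector [2 * lam * x$1 + (x$2 + x$4)^2, x$3,
             lam * x$4 + x$1 * (x$2 + x$4) + (x$2 + x$4)^3 / (3 * lam)]"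

definition flow_time :: "real \<Rightarrow> real^4 \<Rightarrow> real" where
  "flow_time lam x = (x$2 + x$4) / lam"

lemma flow_chart_first_integrals:
  "lam \<noteq> 0 \<Longrightarrow> flow_chart lam (first_integrals lam x) (flow_time lam x) = x"
  by (simp add: vec_eq_iff forall_4 flow_chart_def first_integrals_def flow_time_def Let_def
      field_simps power2_eq_square power3_eq_cube)

lemma first_integrals_flow_chart:
  "lam \<noteq> 0 \<Longrightarrow> first_integrals lam (flow_chart lam p s) = p"
  by (simp add: vec_eq_iff forall_3 flow_chart_def first_integrals_def Let_def
      field_simps power2_eq_square power3_eq_cube)

lemma flow_time_flow_chart: "lam \<noteq> 0 \<Longrightarrow> flow_time lam (flow_chart lam p s) = s"
  by (simp add: flow_chart_def flow_time_def Let_def)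

lemma linear_flow_chart_0: "linear (\<lambda>p. flow_chart lam p 0)"
  by (intro linearI)
    (auto simp: vec_eq_iff forall_4 flow_chart_def Let_def add_divide_distrib diff_divide_distrib)

lemma lie_xi_field_eq_0_iff:
  "lie (xi_field lam) A x = 0 \<longleftrightarrow>
     dir_deriv (xi_field lam x) (\<lambda>y. A y $ 1) x = A x $ 4 - A x $ 2 \<and>
     dir_deriv (xi_field lam x) (\<lambda>y. A y $ 2) x = A x $ 1 \<and>
     dir_deriv (xi_field lam x) (\<lambda>y. A y $ 3) x = 0 \<and>
     dir_deriv (xi_field lam x) (\<lambda>y. A y $ 4) x = A x $ 1"
proof -
  have "pd i (\<lambda>y. xi_field lam y $ k) x = xi_field 0 (axis i 1) $ k" for i k
    using exhaust_4[of k]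
    by (intro pd_eqI) (auto simp: xi_field_def intro!: derivative_eq_intros)
  then show ?thesis
    unfolding lie_def vec_eq_iff forall_4
    by (simp add: sum.distrib dir_deriv_def[symmetric] sum_4 xi_field_def axis_def) argo
qed

definition lie_ode :: "(real \<Rightarrow> real^4) \<Rightarrow> bool" where
  "lie_ode a \<longleftrightarrow> (\<forall>s. ((\<lambda>s. a s $ 1) has_real_derivative a s $ 4 - a s $ 2) (at s) \<and>
                      ((\<lambda>s. a s $ 2) has_real_derivative a s $ 1) (at s) \<and>
                      ((\<lambda>s. a s $ 3) has_real_derivative 0) (at s) \<and>
                      ((\<lambda>s. a s $ 4) has_real_derivative a s $ 1) (at s))"

lemma lie_ode_solution:
  assumes "lie_ode a"
  defines "c \<equiv> a 0 $ 4 - a 0 $ 2"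
  shows "a s $ 1 = c * s + a 0 $ 1"
    and "a s $ 2 = c * s^2 / 2 + a 0 $ 1 * s + a 0 $ 2"
    and "a s $ 3 = a 0 $ 3"
    and "a s $ 4 = a s $ 2 + c"
proof -
  have d1: "((\<lambda>s. a s $ 1) has_real_derivative a t $ 4 - a t $ 2) (at t)"
    and d2: "((\<lambda>s. a s $ 2) has_real_derivative a t $ 1) (at t)"
    and d3: "((\<lambda>s. a s $ 3) has_real_derivative 0) (at t)"
    and d4: "((\<lambda>s. a s $ 4) has_real_derivative a t $ 1) (at t)" for t
    using assms(1) unfolding lie_ode_def by blast+
  note const = DERIV_isconst_all[OF allI, where y = 0]
  show "a s $ 3 = a 0 $ 3"
    using const[OF d3] .
  have "((\<lambda>s. a s $ 4 - a s $ 2) has_real_derivative 0) (at t)" for t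
    using DERIV_diff[OF d4 d2] by simp
  note const42 = const[OF this]
  show a4: "a s $ 4 = a s $ 2 + c" for s
    using const42[of s] unfolding c_def by simp
  have "((\<lambda>s. a s $ 1 - c * s) has_real_derivative 0) (at t)" for t
    using DERIV_diff[OF d1[of t] DERIV_cmult_Id[of c]] a4[of t] by simp
  note const1 = const[OF this]
  show a1: "a s $ 1 = c * s + a 0 $ 1" for s
    using const1[of s] by simp
  have poly: "((\<lambda>s. c * s^2 / 2 + a 0 $ 1 * s) has_real_derivative c * t + a 0 $ 1) (at t)" for t
    by (auto intro!: derivative_eq_intros)
  have "((\<lambda>s. a s $ 2 - (c * s^2 / 2 + a 0 $ 1 * s)) has_real_derivative 0) (at t)" for t
    using DERIV_diff[OF d2[of t] poly[of t]] a1[of t] by simp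
  from const[OF this, where x = s] show "a s $ 2 = c * s^2 / 2 + a 0 $ 1 * s + a 0 $ 2"
    by simp
qed

lemma lie_ode_polynomialI:
  assumes "\<And>s. a s $ 1 = c2 * s + c3 \<and> a s $ 2 = c2 * s^2 / 2 + c3 * s + c1 \<and>
                a s $ 3 = b \<and> a s $ 4 = a s $ 2 + c2"
  shows "lie_ode a"
proof -
  have "(\<lambda>s. a s $ 1) = (\<lambda>s. c2 * s + c3)" "(\<lambda>s. a s $ 2) = (\<lambda>s. c2 * s^2 / 2 + c3 * s + c1)"
    "(\<lambda>s. a s $ 3) = (\<lambda>s. b)" "(\<lambda>s. a s $ 4) = (\<lambda>s. c2 * s^2 / 2 + c3 * s + c1 + c2)"
    using assms by auto
  with assms show ?thesis
    unfolding lie_ode_def by (auto intro!: derivative_eq_intros)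
qed

lemma lie_ode_along_chart_iff:
  fixes \<phi> :: "real^'n \<Rightarrow> real \<Rightarrow> 'a" and A :: "'a \<Rightarrow> real^4"
  assumes chart: "\<And>x. \<phi> (q x) (\<tau> x) = x" "\<And>p s. q (\<phi> p s) = p" "\<And>p s. \<tau> (\<phi> p s) = s"
    and smooth: "\<And>i. smooth (\<lambda>p. A (\<phi> p 0) $ i)"
  shows "(\<forall>p. lie_ode (\<lambda>s. A (\<phi> p s))) \<longleftrightarrow>
    (\<exists>C1 C2 C3 B :: real^'n \<Rightarrow> real. smooth C1 \<and> smooth C2 \<and> smooth C3 \<and> smooth B \<and>
      (\<forall>x. A x $ 1 = C2 (q x) * \<tau> x + C3 (q x) \<and>
           A x $ 2 = C2 (q x) * (\<tau> x)^2 / 2 + C3 (q x) * \<tau> x + C1 (q x) \<and>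
           A x $ 3 = B (q x) \<and>
           A x $ 4 = A x $ 2 + C2 (q x)))"
    (is "_ \<longleftrightarrow> (\<exists>C1 C2 C3 B. ?rep C1 C2 C3 B)")
proof
  assume ode: "\<forall>p. lie_ode (\<lambda>s. A (\<phi> p s))"
  have "?rep (\<lambda>p. A (\<phi> p 0) $ 2) (\<lambda>p. A (\<phi> p 0) $ 4 - A (\<phi> p 0) $ 2)
             (\<lambda>p. A (\<phi> p 0) $ 1) (\<lambda>p. A (\<phi> p 0) $ 3)"
    using lie_ode_solution[OF ode[rule_format]] chart(1)
    by (intro conjI allI smooth_diff smooth) metis+
  then show "\<exists>C1 C2 C3 B. ?rep C1 C2 C3 B"
    by blast
next
  assume "\<exists>C1 C2 C3 B. ?rep C1 C2 C3 B"
  then obtain C1 C2 C3 B where "?rep C1 C2 C3 B"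
    by blast
  then show "\<forall>p. lie_ode (\<lambda>s. A (\<phi> p s))"
    using chart(2,3) by (metis lie_ode_polynomialI)
qed

lemma lie_eq_0_iff_lie_ode_along_flow:
  assumes "lam \<noteq> 0" and "\<And>i x. (\<lambda>y. A y $ i) differentiable at x"
  shows "(\<forall>x. lie (xi_field lam) A x = 0) \<longleftrightarrow> (\<forall>p. lie_ode (\<lambda>s. A (flow_chart lam p s)))"
proof -
  have deriv: "((\<lambda>s. A (flow_chart lam p s) $ i) has_real_derivative d) (at s) \<longleftrightarrow>
      dir_deriv (xi_field lam (flow_chart lam p s)) (\<lambda>y. A y $ i) (flow_chart lam p s) = d"
    for p s i d
    using has_real_derivative_along_curve[OF flow_chart_integral_curve[OF assms(1)] assms(2)]
      DERIV_unique by blast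
  have "lie_ode (\<lambda>s. A (flow_chart lam p s)) \<longleftrightarrow> (\<forall>s. lie (xi_field lam) A (flow_chart lam p s) = 0)"
    for p
    unfolding lie_ode_def lie_xi_field_eq_0_iff deriv ..
  then show ?thesis
    using flow_chart_first_integrals[OF assms(1)] by metis
qed

theorem mainTheorem4:
  fixes lam :: real and A :: "real^4 \<Rightarrow> real^4"
  assumes "lam \<noteq> 0"
    and "smooth_field A"
  defines "xi \<equiv> (\<lambda>x. e12 x - e14 x + lam *\<^sub>R e2 x)"
    and "t1 \<equiv> (\<lambda>x::real^4. 2 * lam * x$1 + (x$2 + x$4)^2)"
    and "t2 \<equiv> (\<lambda>x::real^4. (x$2 + x$4) / lam)"
    and "t3 \<equiv> (\<lambda>x::real^4. x$3)"
    and "t4 \<equiv> (\<lambda>x::real^4. lam * x$4 + x$1 * (x$2 + x$4) + (x$2 + x$4)^3 / (3 * lam))"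
  shows "(\<forall>x. lie xi A x = 0) \<longleftrightarrow>
    (\<exists>C1 C2 C3 B :: real^3 \<Rightarrow> real. smooth C1 \<and> smooth C2 \<and> smooth C3 \<and> smooth B \<and>
      (\<forall>x. let p = vector [t1 x, t3 x, t4 x] in
         A x $ 1 = C2 p * t2 x + C3 p \<and>
         A x $ 2 = C2 p * (t2 x)^2 / 2 + C3 p * t2 x + C1 p \<and>
         A x $ 3 = B p \<and>
         A x $ 4 = A x $ 2 + C2 p))"
proof -
  have xi: "xi = xi_field lam"
    by (auto simp: xi_def fun_eq_iff vec_eq_iff forall_4 e12_def e14_def e2_def xi_field_def)
  have coords: "vector [t1 x, t3 x, t4 x] = first_integrals lam x" "t2 x = flow_time lam x" for x
    by (simp_all add: t1_def t2_def t3_def t4_def first_integrals_def flow_time_def)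
  have smooth: "smooth (\<lambda>y. A y $ i)" for i
    using assms(2) unfolding smooth_field_def by blast
  then have "(\<lambda>y. A y $ i) differentiable at x" for i x
    unfolding smooth_def by (metis Ck.simps(2))
  then have "(\<forall>x. lie xi A x = 0) \<longleftrightarrow> (\<forall>p. lie_ode (\<lambda>s. A (flow_chart lam p s)))"
    unfolding xi by (rule lie_eq_0_iff_lie_ode_along_flow[OF assms(1)])
  also have "\<dots> \<longleftrightarrow> (\<exists>C1 C2 C3 B :: real^3 \<Rightarrow> real. smooth C1 \<and> smooth C2 \<and> smooth C3 \<and> smooth B \<and>
      (\<forall>x. A x $ 1 = C2 (first_integrals lam x) * flow_time lam x + C3 (first_integrals lam x) \<and>
           A x $ 2 = C2 (first_integrals lam x) * (flow_time lam x)^2 / 2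
                     + C3 (first_integrals lam x) * flow_time lam x + C1 (first_integrals lam x) \<and>
           A x $ 3 = B (first_integrals lam x) \<and>
           A x $ 4 = A x $ 2 + C2 (first_integrals lam x)))"
    using assms(1) smooth
    by (intro lie_ode_along_chart_iff flow_chart_first_integrals first_integrals_flow_chart
        flow_time_flow_chart smooth_comp_linear[OF linear_flow_chart_0])
  finally show ?thesis
    unfolding Let_def coords .
qed

end
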